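(* Let $\varphi,\psi$ be Denjoy counterexamples with rotation numbers $\alpha,\beta$ such that $1,\alpha,\beta$ are rationally independent, and with Cantor minimal sets $\mathcal{Q}_1,\mathcal{Q}_2\subset\mathbb{T}^1$ respectively. Suppose $x_0\in\mathcal{Q}_{1,\mathrm{irr}}$, $y_0\in\mathcal{Q}_{2,\mathrm{irr}}$, closed intervals $J_1,J_2$ with endpoints in $\mathcal{Q}_{1,\mathrm{irr}}$, $\mathcal{Q}_{2,\mathrm{irr}}$ and midpoints $x_0,y_0$, and constants $C_1,C_2>0$ are such that every component $I$ of $\mathbb{T}^1\setminus\mathcal{Q}_1$ contained in $J_1$ satisfies $|I|\le C_1 d(x_0,x_I)^2$ and every component $I$ of $\mathbb{T}^1\setminus\mathcal{Q}_2$ contained in $J_2$ satisfies $|I|\le C_2 d(y_0,y_I)^2$ ($x_I,y_I$ midpoints). Let $f=\varphi\times\psi:\mathbb{T}^2\to\mathbb{T}^2$ and $z_0=(x_0,y_0)$. Then every open circular sector in $\mathbb{T}^2$ with vertex $z_0$, any radius $r>0$ (small enough that the sector is embedded), and opening angle in $(0,\pi)$ intersects $(\mathcal{Q}_{1,\mathrm{irr}}\times\mathcal{Q}_{2,\mathrm{irr}})\setminus\mathcal{O}_f(z_0)$.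
   Context: $\mathbb{T}^1=\mathbb{R}/\mathbb{Z}$ with metric $d$, $|I|$ the length of an interval; $\mathbb{T}^2=\mathbb{T}^1\times\mathbb{T}^1$. A Denjoy counterexample is an orientation-preserving circle homeomorphism with irrational rotation number that is not transitive; its unique minimal set is a Cantor set. For a Cantor set $\mathcal{Q}\subset\mathbb{T}^1$, $\mathcal{Q}_{\mathrm{irr}}$ is $\mathcal{Q}$ minus the endpoints of the components of $\mathbb{T}^1\setminus\mathcal{Q}$. $\mathcal{O}_f(z_0)=\{f^n(z_0):n\in\mathbb{Z}\}$. (Note $\mathcal{Q}_{1,\mathrm{irr}}\times\mathcal{Q}_{2,\mathrm{irr}}$ is the regular set of the semi-conjugacy of $f$ to the translation by $(\alpha,\beta)$.) *)

theory Defs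
  imports "HOL-Analysis.Analysis"
begin

text \<open>The circle T^1 = R/Z is handled through lifts: points of T^1 are
represented by reals, subsets of T^1 by Z-periodic subsets of R, and an orientation-preserving
circle homeomorphism by a lift F : R -> R (continuous, strictly increasing, F(x+1) = F x + 1).\<close>

definition periodic_set :: "real set \<Rightarrow> bool" where
  "periodic_set S \<longleftrightarrow> (\<forall>x. x \<in> S \<longleftrightarrow> x + 1 \<in> S)"

definition circle_homeo_lift :: "(real \<Rightarrow> real) \<Rightarrow> bool" where
  "circle_homeo_lift F \<longleftrightarrow> continuous_on UNIV F \<and> strict_mono F \<and> (\<forall>x. F (x + 1) = F x + 1)"

definition has_rotation_number :: "(real \<Rightarrow> real) \<Rightarrow> real \<Rightarrow> bool" where
  "has_rotation_number F \<alpha> \<longleftrightarrow> (\<lambda>n. (F ^^ n) 0 / real n) \<longlonglongrightarrow> \<alpha>"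

definition circle_transitive :: "(real \<Rightarrow> real) \<Rightarrow> bool" where
  "circle_transitive F \<longleftrightarrow>
     (\<forall>U V. open U \<and> open V \<and> U \<noteq> {} \<and> V \<noteq> {} \<longrightarrow>
        (\<exists>(n::nat) (k::int). (F ^^ n) ` U \<inter> (\<lambda>x. x + of_int k) ` V \<noteq> {}))"

definition denjoy_counterexample :: "(real \<Rightarrow> real) \<Rightarrow> real \<Rightarrow> bool" where
  "denjoy_counterexample F \<alpha> \<longleftrightarrow>
     circle_homeo_lift F \<and> has_rotation_number F \<alpha> \<and> \<alpha> \<notin> \<rat> \<and> \<not> circle_transitive F"

definition minimal_set :: "(real \<Rightarrow> real) \<Rightarrow> real set \<Rightarrow> bool" where
  "minimal_set F Q \<longleftrightarrow> Q \<noteq> {} \<and> closed Q \<and> periodic_set Q \<and> F ` Q = Q \<and>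
     (\<forall>S. S \<subseteq> Q \<and> S \<noteq> {} \<and> closed S \<and> periodic_set S \<and> F ` S = S \<longrightarrow> S = Q)"

definition irr_part :: "real set \<Rightarrow> real set" where
  "irr_part Q = {x \<in> Q. \<forall>a b. {a<..<b} \<in> components (- Q) \<longrightarrow> x \<noteq> a \<and> x \<noteq> b}"

definition iter_int :: "('a \<Rightarrow> 'a) \<Rightarrow> int \<Rightarrow> 'a \<Rightarrow> 'a" where
  "iter_int F n = (if n \<ge> 0 then F ^^ nat n else inv F ^^ nat (- n))"

definition orbit2 :: "(real \<Rightarrow> real) \<Rightarrow> (real \<Rightarrow> real) \<Rightarrow> real \<times> real \<Rightarrow> (real \<times> real) set" where
  "orbit2 F G z = {(iter_int F n (fst z) + of_int k, iter_int G n (snd z) + of_int m) | n k m. True}"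

definition sector :: "real \<times> real \<Rightarrow> real \<Rightarrow> real \<Rightarrow> real \<Rightarrow> (real \<times> real) set" where
  "sector z r t0 \<theta> = {(fst z + \<rho> * cos t, snd z + \<rho> * sin t) | \<rho> t.
      0 < \<rho> \<and> \<rho> < r \<and> t0 < t \<and> t < t0 + \<theta>}"

end

theory Submission
  imports Defs
begin

text \<open>
  In each coordinate, the quadratic bound on the gaps of the Cantor set Q near x0
  forces every interval of length proportional to its distance from x0 (at small scales) to
  meet Q: a gap containing such an interval would be too long. Since the minimal set Q is
  perfect and has only countably many gap endpoints, every such interval then contains
  uncountably many points of irr_part Q. Given a sector with vertex z0 = (x0, y0), take the
  point at distance s on its bisecting ray; the product of two such windows of size \<eta> s around
  it lies in the sector and contains uncountably many points of
  irr_part Q1 \<times> irr_part Q2 on each horizontal line, while the orbit of z0 is countable.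
\<close>

section \<open>Gaps of a closed subset of the line\<close>

lemma gap_component:
  fixes Q :: "real set"
  assumes "c \<in> Q" "d \<in> Q" "c < d" "{c<..<d} \<inter> Q = {}"
  shows "{c<..<d} \<in> components (- Q)"
  unfolding in_components_maximal
proof (intro conjI allI impI)
  show "{c<..<d} \<noteq> {}" "{c<..<d} \<subseteq> - Q" "connected {c<..<d}"
    using assms by auto
  fix D assume D: "D \<noteq> {} \<and> {c<..<d} \<subseteq> D \<and> D \<subseteq> - Q \<and> connected D"
  have "(c + d) / 2 \<in> {c<..<d}"
    using assms(3) by simp
  then have mid: "(c + d) / 2 \<in> D"
    using D by blast
  have between: "x \<in> D" if "u \<in> D" "v \<in> D" "u \<le> x" "x \<le> v" for u v x
    using D that is_interval_connected_1 unfolding is_interval_1 by blast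
  have "D \<subseteq> {c<..<d}"
  proof
    fix y assume "y \<in> D"
    have "c \<notin> D" "d \<notin> D"
      using D assms(1,2) by auto
    then have "\<not> y \<le> c" "\<not> d \<le> y"
      using between[OF \<open>y \<in> D\<close> mid, of c] between[OF mid \<open>y \<in> D\<close>, of d] assms(3) by auto
    then show "y \<in> {c<..<d}"
      by simp
  qed
  then show "D = {c<..<d}"
    using D by blast
qed

lemma enclosing_gap:
  fixes Q :: "real set"
  assumes "closed Q" "p \<in> Q" "q \<in> Q" "p \<le> a" "a < b" "b \<le> q" "{a<..<b} \<inter> Q = {}"
  obtains c d where "p \<le> c" "c \<le> a" "b \<le> d" "d \<le> q" "{c<..<d} \<in> components (- Q)"
proof -
  define L R where "L = Q \<inter> {p..a}" and "R = Q \<inter> {b..q}"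
  have "closed L" "closed R"
    using assms(1) by (auto simp: L_def R_def)
  moreover have "p \<in> L" "q \<in> R"
    using assms by (auto simp: L_def R_def)
  moreover have bdd: "bdd_above L" "bdd_below R"
    by (auto simp: L_def R_def bdd_above_def bdd_below_def)
  ultimately have cL: "Sup L \<in> L" and dR: "Inf R \<in> R"
    using closed_contains_Sup[of L] closed_contains_Inf[of R] by blast+
  then have c: "Sup L \<in> Q" "p \<le> Sup L" "Sup L \<le> a"
    and d: "Inf R \<in> Q" "b \<le> Inf R" "Inf R \<le> q"
    by (auto simp: L_def R_def)
  have no_point: "y \<notin> Q" if "Sup L < y" "y < Inf R" for y
  proof
    assume "y \<in> Q"
    moreover have "y \<notin> L" "y \<notin> R"
      using that bdd cSup_upper[of y L] cInf_lower[of y R] by force+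
    ultimately have "y \<in> {a<..<b}"
      using that c d by (auto simp: L_def R_def)
    then show False
      using \<open>y \<in> Q\<close> assms(7) by blast
  qed
  have "{Sup L<..<Inf R} \<in> components (- Q)"
    using c d assms(5) no_point by (intro gap_component) auto
  then show thesis
    using c d by (intro that)
qed

definition gap_endpoints :: "real set \<Rightarrow> real set" where
  "gap_endpoints Q = {x. \<exists>a b. {a<..<b} \<in> components (- Q) \<and> (x = a \<or> x = b)}"

lemma irr_part_eq: "irr_part Q = Q - gap_endpoints Q"
  unfolding irr_part_def gap_endpoints_def by blast

text \<open>A closed set has countably many gaps (they are disjoint open sets), hence countably many
  gap endpoints.\<close>
lemma countable_gap_endpoints:
  fixes Q :: "real set"
  assumes "closed Q"
  shows "countable (gap_endpoints Q)"
proof -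
  have "open (- Q)"
    using assms by (simp add: open_Compl)
  then have "countable (components (- Q))"
    using pairwise_disjoint_components[of "- Q"]
    by (intro countable_disjoint_open_subsets) (auto simp: open_components pairwise_def disjnt_def)
  moreover have "gap_endpoints Q \<subseteq> (\<Union>K\<in>components (- Q). {Inf K, Sup K})"
  proof
    fix x assume "x \<in> gap_endpoints Q"
    then obtain a b where ab: "{a<..<b} \<in> components (- Q)" "x = a \<or> x = b"
      by (auto simp: gap_endpoints_def)
    then have "a < b"
      using in_components_nonempty by fastforce
    then show "x \<in> (\<Union>K\<in>components (- Q). {Inf K, Sup K})"
      using ab by force
  qed
  moreover have "countable (\<Union>K\<in>components (- Q). {Inf K, Sup K})"
    using calculation(1) by (intro countable_UN) auto
  ultimately show ?thesis
    using countable_subset by blast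
qed

lemma periodic_setD:
  assumes "periodic_set Q" "x \<in> Q"
  shows "x + 1 \<in> Q" "x - 1 \<in> Q"
  using assms unfolding periodic_set_def by (metis diff_add_cancel)+

text \<open>If x0 in irr_part Q were isolated from the right, the interval to the right of x0
  up to the next point of Q (which exists by periodicity) would be a gap ending at x0.\<close>
lemma irr_part_approx_right:
  fixes Q :: "real set"
  assumes "closed Q" "periodic_set Q" "x0 \<in> irr_part Q" "l > 0"
  obtains q where "q \<in> Q" "x0 < q" "q < x0 + l"
proof (rule ccontr)
  assume no_point: "\<not> thesis"
  define l' where "l' = min l 1"
  have x0: "x0 \<in> Q" "x0 + 1 \<in> Q"
    using assms(2,3) by (auto simp: irr_part_def periodic_setD)
  have gap: "{x0<..<x0 + l'} \<inter> Q = {}"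
    using no_point that by (force simp: l'_def)
  have "x0 < x0 + l'" "x0 + l' \<le> x0 + 1"
    using assms(4) by (auto simp: l'_def)
  then obtain c d where "x0 \<le> c" "c \<le> x0" "{c<..<d} \<in> components (- Q)"
    using enclosing_gap[OF assms(1) x0 order_refl _ _ gap] by blast
  then show False
    using assms(3) by (auto simp: irr_part_def)
qed

lemma irr_part_approx_left:
  fixes Q :: "real set"
  assumes "closed Q" "periodic_set Q" "x0 \<in> irr_part Q" "l > 0"
  obtains q where "q \<in> Q" "x0 - l < q" "q < x0"
proof (rule ccontr)
  assume no_point: "\<not> thesis"
  define l' where "l' = min l 1"
  have x0: "x0 - 1 \<in> Q" "x0 \<in> Q"
    using assms(2,3) by (auto simp: irr_part_def periodic_setD)
  have gap: "{x0 - l'<..<x0} \<inter> Q = {}"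
    using no_point that by (force simp: l'_def)
  have "x0 - 1 \<le> x0 - l'" "x0 - l' < x0"
    using assms(4) by (auto simp: l'_def)
  then obtain c d where "x0 \<le> d" "d \<le> x0" "{c<..<d} \<in> components (- Q)"
    using enclosing_gap[OF assms(1) x0 _ _ order_refl gap] by blast
  then show False
    using assms(3) by (auto simp: irr_part_def)
qed

section \<open>Minimal sets are perfect, so their irrational parts are uncountable\<close>

lemma islimpt_strict_mono_image:
  fixes F :: "real \<Rightarrow> real"
  assumes cont: "continuous_on UNIV F" and mono: "strict_mono F"
  shows "F x islimpt F ` Q \<longleftrightarrow> x islimpt Q"
proof
  assume lim: "F x islimpt F ` Q"
  show "x islimpt Q"
    unfolding islimpt_approachable
  proof (intro allI impI)
    fix e :: real assume "e > 0"
    then have "F (x - e) < F x" "F x < F (x + e)"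
      using mono by (auto intro: strict_monoD)
    then have "min (F x - F (x - e)) (F (x + e) - F x) > 0"
      by simp
    then obtain y where "y \<in> F ` Q" "y \<noteq> F x" "dist y (F x) < min (F x - F (x - e)) (F (x + e) - F x)"
      using lim unfolding islimpt_approachable by blast
    then obtain q where q: "q \<in> Q" "F q \<noteq> F x" "F (x - e) < F q" "F q < F (x + e)"
      by (auto simp: dist_real_def abs_less_iff)
    then have "x - e < q" "q < x + e" "q \<noteq> x"
      using mono strict_mono_less by blast+
    then show "\<exists>q\<in>Q. q \<noteq> x \<and> dist q x < e"
      using q(1) by (auto simp: dist_real_def)
  qed
next
  assume lim: "x islimpt Q"
  show "F x islimpt F ` Q"
    unfolding islimpt_approachable
  proof (intro allI impI)
    fix e :: real assume "e > 0"
    moreover have "isCont F x"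
      using cont by (simp add: continuous_on_eq_continuous_at)
    ultimately obtain d where "d > 0" and d: "\<And>y. dist y x < d \<Longrightarrow> dist (F y) (F x) < e"
      unfolding continuous_at_eps_delta by blast
    then obtain q where "q \<in> Q" "q \<noteq> x" "dist q x < d"
      using lim unfolding islimpt_approachable by blast
    then show "\<exists>y\<in>F ` Q. y \<noteq> F x \<and> dist y (F x) < e"
      using d mono strict_mono_eq by blast
  qed
qed

text \<open>The minimal set Q of a circle homeomorphism having a point of irr_part Q is perfect:
  its set of accumulation points is nonempty, closed, periodic and invariant, hence equals Q
  by minimality.\<close>
lemma minimal_set_perfect:
  fixes F :: "real \<Rightarrow> real"
  assumes F: "circle_homeo_lift F" and M: "minimal_set F Q" and x0: "x0 \<in> irr_part Q"
  shows "x islimpt Q \<longleftrightarrow> x \<in> Q"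
proof -
  have Qc: "closed Q" and Qp: "periodic_set Q" and FQ: "F ` Q = Q"
    using M unfolding minimal_set_def by auto
  have F_limpt: "F y islimpt Q \<longleftrightarrow> y islimpt Q" for y
    using islimpt_strict_mono_image[of F y Q] F FQ by (simp add: circle_homeo_lift_def)
  have "(\<lambda>y. y + 1) ` Q = Q"
  proof
    show "(\<lambda>y. y + 1) ` Q \<subseteq> Q"
      using Qp by (auto simp: periodic_setD)
    show "Q \<subseteq> (\<lambda>y. y + 1) ` Q"
    proof
      fix y assume "y \<in> Q"
      then have "y - 1 \<in> Q"
        by (rule periodic_setD(2)[OF Qp])
      then show "y \<in> (\<lambda>y. y + 1) ` Q"
        by (rule image_eqI[rotated]) simp
    qed
  qed
  then have shift_limpt: "y + 1 islimpt Q \<longleftrightarrow> y islimpt Q" for y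
    using islimpt_strict_mono_image[of "\<lambda>y. y + 1" y Q]
    by (simp add: continuous_intros strict_mono_def)
  define S where "S = {y. y islimpt Q}"
  have SQ: "S \<subseteq> Q"
    using Qc closed_limpt S_def by blast
  have "x0 islimpt Q"
    unfolding islimpt_approachable
  proof (intro allI impI)
    fix e :: real assume "e > 0"
    then obtain q where "q \<in> Q" "x0 < q" "q < x0 + e"
      using irr_part_approx_right[OF Qc Qp x0] by blast
    then show "\<exists>q\<in>Q. q \<noteq> x0 \<and> dist q x0 < e"
      by (auto simp: dist_real_def)
  qed
  then have "S \<noteq> {}"
    by (auto simp: S_def)
  moreover have "closed S"
    unfolding S_def by (rule closed_limpts)
  moreover have "periodic_set S"
    by (simp add: periodic_set_def S_def shift_limpt)
  moreover have "F ` S = S"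
  proof
    show "F ` S \<subseteq> S"
      using F_limpt by (auto simp: S_def)
    show "S \<subseteq> F ` S"
    proof
      fix y assume "y \<in> S"
      then obtain z where "y = F z"
        using SQ FQ by blast
      then show "y \<in> F ` S"
        using \<open>y \<in> S\<close> F_limpt by (auto simp: S_def)
    qed
  qed
  ultimately have "S = Q"
    using M SQ unfolding minimal_set_def by blast
  then show ?thesis
    by (auto simp: S_def)
qed

text \<open>A nonempty relatively open part of a closed perfect subset of the line is uncountable
  (Baire category theorem: a countable perfect complete space cannot exist).\<close>
lemma perfect_set_uncountable:
  fixes Q A :: "real set"
  assumes Qc: "closed Q" and perfect: "\<And>x. x \<in> Q \<Longrightarrow> x islimpt Q"
    and A: "open A" and ne: "A \<inter> Q \<noteq> {}"
  shows "uncountable (A \<inter> Q)"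
proof
  assume "countable (A \<inter> Q)"
  define G where "G = (\<lambda>p. Q - {p}) ` (A \<inter> Q)"
  have "countable G"
    unfolding G_def using \<open>countable (A \<inter> Q)\<close> by (rule countable_image)
  moreover have "openin (top_of_set Q) T \<and> Q \<subseteq> closure T" if "T \<in> G" for T
  proof -
    obtain p where T: "T = Q - {p}"
      using \<open>T \<in> G\<close> by (auto simp: G_def)
    have "openin (top_of_set Q) (Q \<inter> - {p})"
      by (rule openin_open_Int) (simp add: open_Compl)
    moreover have "Q \<subseteq> closure (Q - {p})"
    proof
      fix x assume "x \<in> Q"
      show "x \<in> closure (Q - {p})"
      proof (cases "x = p")
        case True
        then show ?thesis
          using perfect[OF \<open>x \<in> Q\<close>] islimpt_in_closure by blast
      next
        case False
        then show ?thesis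
          using \<open>x \<in> Q\<close> by (intro subsetD[OF closure_subset]) simp
      qed
    qed
    ultimately show ?thesis
      unfolding T Diff_eq by simp
  qed
  ultimately have "Q \<subseteq> closure (\<Inter>G)"
    by (rule Baire[OF Qc])
  moreover have "\<Inter>G \<subseteq> - A"
  proof
    fix y assume y: "y \<in> \<Inter>G"
    have removed: "Q - {p} \<in> G" if "p \<in> A \<inter> Q" for p
      unfolding G_def using that by (rule imageI)
    obtain p where "p \<in> A \<inter> Q"
      using ne by blast
    then have "y \<in> Q"
      using y removed by blast
    then show "y \<in> - A"
      using y removed by blast
  qed
  then have "closure (\<Inter>G) \<subseteq> - A"
    using A by (intro closure_minimal) (auto simp: closed_Compl)
  ultimately show False
    using ne by blast
qed

lemma uncountable_irr_part:
  fixes Q :: "real set"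
  assumes "closed Q" "\<And>x. x \<in> Q \<Longrightarrow> x islimpt Q" "{a<..<b} \<inter> Q \<noteq> {}"
  shows "uncountable ({a<..<b} \<inter> irr_part Q)"
proof
  assume "countable ({a<..<b} \<inter> irr_part Q)"
  then have "countable ({a<..<b} \<inter> irr_part Q \<union> gap_endpoints Q)"
    using countable_gap_endpoints[OF assms(1)] by simp
  moreover have "{a<..<b} \<inter> Q \<subseteq> {a<..<b} \<inter> irr_part Q \<union> gap_endpoints Q"
    unfolding irr_part_eq by blast
  ultimately have "countable ({a<..<b} \<inter> Q)"
    by (rule countable_subset[rotated])
  then show False
    using perfect_set_uncountable[OF assms(1,2) open_greaterThanLessThan assms(3)] by blast
qed

section \<open>Quadratically small gaps force intervals of proportional size to meet Q\<close>

lemma quadratic_gap_bound: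
  fixes C D L :: real
  assumes "0 < C" "0 \<le> D" "0 < L" "L \<le> C * (D + L / 2)\<^sup>2" "L * C \<le> 1 / 2"
  shows "3 * L \<le> 8 * C * D\<^sup>2"
proof -
  have "(D + L / 2)\<^sup>2 \<le> 2 * D\<^sup>2 + L\<^sup>2 / 2"
    using zero_le_power2[of "D - L / 2"] by (simp add: power2_eq_square algebra_simps)
  then have "L \<le> C * (2 * D\<^sup>2 + L\<^sup>2 / 2)"
    using assms(1,4) by (meson less_imp_le mult_left_mono order_trans)
  also have "\<dots> = 2 * C * D\<^sup>2 + (L * C) * L / 2"
    by (simp add: power2_eq_square algebra_simps)
  also have "\<dots> \<le> 2 * C * D\<^sup>2 + L / 4"
    using assms(3,5) mult_right_mono[of "L * C" "1 / 2" L] by simp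
  finally show ?thesis
    by simp
qed

lemma proportional_intervals_meet:
  fixes Q :: "real set"
  assumes Qc: "closed Q" and x0: "x0 \<in> Q"
    and right: "\<And>l. l > 0 \<Longrightarrow> \<exists>q\<in>Q. x0 < q \<and> q < x0 + l"
    and left: "\<And>l. l > 0 \<Longrightarrow> \<exists>q\<in>Q. x0 - l < q \<and> q < x0"
    and \<delta>: "\<delta> > 0" and C: "C > 0"
    and gaps: "\<forall>a b. {a<..<b} \<in> components (- Q) \<and> {a<..<b} \<subseteq> {x0 - \<delta> .. x0 + \<delta>} \<longrightarrow>
           b - a \<le> C * \<bar>x0 - (a + b) / 2\<bar>\<^sup>2"
    and \<epsilon>: "\<epsilon> > 0"
  obtains s0 where "s0 > 0"
    and "\<And>a b D. D < s0 \<Longrightarrow> x0 - D \<le> a \<Longrightarrow> a < b \<Longrightarrow> b \<le> x0 + D \<Longrightarrow> \<epsilon> * D \<le> b - a \<Longrightarrow>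
           {a<..<b} \<inter> Q \<noteq> {}"
proof -
  define l where "l = min \<delta> (1 / (4 * C))"
  have "l > 0"
    using \<delta> C by (simp add: l_def)
  then obtain qr ql where qr: "qr \<in> Q" "x0 < qr" "qr < x0 + l"
    and ql: "ql \<in> Q" "x0 - l < ql" "ql < x0"
    using right left by meson
  define s0 where "s0 = min (min (qr - x0) (x0 - ql)) (\<epsilon> / (4 * C))"
  show thesis
  proof (rule that)
    show "s0 > 0"
      using qr ql \<epsilon> C by (simp add: s0_def)
  next
    fix a b D
    assume D: "D < s0" and ab: "x0 - D \<le> a" "a < b" "b \<le> x0 + D" "\<epsilon> * D \<le> b - a"
    show "{a<..<b} \<inter> Q \<noteq> {}"
    proof
      assume empty: "{a<..<b} \<inter> Q = {}"
      have "ql \<le> a" "b \<le> qr"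
        using D ab by (auto simp: s0_def)
      then obtain c d where cd: "ql \<le> c" "c \<le> a" "b \<le> d" "d \<le> qr" "{c<..<d} \<in> components (- Q)"
        using enclosing_gap[OF Qc ql(1) qr(1) _ ab(2) _ empty] by blast
      have mid: "\<bar>x0 - (c + d) / 2\<bar> \<le> D + (d - c) / 2"
        using cd(2,3) ab(1-3) by (simp add: abs_le_iff field_simps)
      have "{c<..<d} \<subseteq> {x0 - \<delta> .. x0 + \<delta>}"
        using cd ql qr by (auto simp: l_def)
      then have "d - c \<le> C * \<bar>x0 - (c + d) / 2\<bar>\<^sup>2"
        using gaps cd(5) by blast
      also have "\<dots> \<le> C * (D + (d - c) / 2)\<^sup>2"
        using mid C by (intro mult_left_mono power_mono) auto
      finally have quad: "d - c \<le> C * (D + (d - c) / 2)\<^sup>2" .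
      have "l \<le> 1 / (4 * C)" "2 * (1 / (4 * C)) = 1 / (2 * C)"
        by (simp_all add: l_def)
      then have "d - c \<le> 1 / (2 * C)"
        using cd ql qr by linarith
      then have "(d - c) * C \<le> 1 / 2"
        using C by (simp add: field_simps)
      moreover have "0 \<le> D" "0 < d - c"
        using ab cd by linarith+
      ultimately have "3 * (d - c) \<le> 8 * C * D\<^sup>2"
        using quadratic_gap_bound[OF C _ _ quad] by blast
      moreover have "\<epsilon> * D \<le> d - c"
        using ab(4) cd(2,3) by linarith
      moreover have "D > 0"
        using ab by linarith
      then have "8 * C * D\<^sup>2 < 2 * (\<epsilon> * D)"
        using D C by (simp add: s0_def power2_eq_square field_simps)
      moreover have "\<epsilon> * D > 0"
        using \<open>D > 0\<close> \<epsilon> by simp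
      ultimately show False
        by argo
    qed
  qed
qed

lemma uncountable_irr_part_near_point:
  fixes F :: "real \<Rightarrow> real" and Q :: "real set"
  assumes F: "circle_homeo_lift F" and M: "minimal_set F Q" and x0: "x0 \<in> irr_part Q"
    and \<delta>: "\<delta> > 0" and C: "C > 0"
    and gaps: "\<forall>a b. {a<..<b} \<in> components (- Q) \<and> {a<..<b} \<subseteq> {x0 - \<delta> .. x0 + \<delta>} \<longrightarrow>
           b - a \<le> C * \<bar>x0 - (a + b) / 2\<bar>\<^sup>2"
    and \<eta>: "0 < \<eta>" "\<eta> \<le> 1"
  obtains s0 where "s0 > 0"
    and "\<And>s c. 0 < s \<Longrightarrow> s < s0 \<Longrightarrow> \<bar>c - x0\<bar> \<le> s \<Longrightarrow>
           uncountable ({c - \<eta> * s<..<c + \<eta> * s} \<inter> irr_part Q)"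
proof -
  have Qc: "closed Q" and Qp: "periodic_set Q"
    using M by (auto simp: minimal_set_def)
  have "x0 \<in> Q"
    using x0 by (simp add: irr_part_def)
  then obtain s0 where "s0 > 0" and meets:
    "\<And>a b D. D < s0 \<Longrightarrow> x0 - D \<le> a \<Longrightarrow> a < b \<Longrightarrow> b \<le> x0 + D \<Longrightarrow> \<eta> * D \<le> b - a \<Longrightarrow>
       {a<..<b} \<inter> Q \<noteq> {}"
    using proportional_intervals_meet[OF Qc _ _ _ \<delta> C gaps \<eta>(1)]
      irr_part_approx_right[OF Qc Qp x0] irr_part_approx_left[OF Qc Qp x0] by metis
  show thesis
  proof (rule that)
    show "s0 / 2 > 0"
      using \<open>s0 > 0\<close> by simp
  next
    fix s c assume s: "0 < s" "s < s0 / 2" "\<bar>c - x0\<bar> \<le> s"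
    have "0 < \<eta> * s" "\<eta> * s \<le> s"
      using s(1) \<eta> by simp_all
    have "{c - \<eta> * s<..<c + \<eta> * s} \<inter> Q \<noteq> {}"
    proof (rule meets[of "2 * s"])
      show "2 * s < s0"
        using s(2) by simp
      show "x0 - 2 * s \<le> c - \<eta> * s" "c + \<eta> * s \<le> x0 + 2 * s"
        using s(3) \<open>\<eta> * s \<le> s\<close> unfolding abs_le_iff by linarith+
      show "c - \<eta> * s < c + \<eta> * s" "\<eta> * (2 * s) \<le> c + \<eta> * s - (c - \<eta> * s)"
        using \<open>0 < \<eta> * s\<close> by simp_all
    qed
    then show "uncountable ({c - \<eta> * s<..<c + \<eta> * s} \<inter> irr_part Q)"
      using uncountable_irr_part[OF Qc] minimal_set_perfect[OF F M x0] by blast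
  qed
qed

section \<open>Planar geometry: a neighbourhood of a point on the bisecting ray lies in the sector\<close>

lemma polar_form_right_half_plane:
  fixes u v :: real
  assumes "0 < u"
  obtains \<phi> where "\<bar>\<phi>\<bar> \<le> \<bar>v\<bar> / u"
    and "sqrt (u\<^sup>2 + v\<^sup>2) * cos \<phi> = u" and "sqrt (u\<^sup>2 + v\<^sup>2) * sin \<phi> = v"
proof
  define w where "w = v / u"
  have "u\<^sup>2 + v\<^sup>2 = u\<^sup>2 * (1 + w\<^sup>2)"
    using assms by (simp add: w_def field_simps)
  then have norm: "sqrt (u\<^sup>2 + v\<^sup>2) = u * sqrt (1 + w\<^sup>2)"
    using assms by (simp add: real_sqrt_mult)
  have "sqrt (1 + w\<^sup>2) > 0"
    by (simp add: add_pos_nonneg)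
  then show "sqrt (u\<^sup>2 + v\<^sup>2) * cos (arctan w) = u" "sqrt (u\<^sup>2 + v\<^sup>2) * sin (arctan w) = v"
    using assms by (simp_all add: norm cos_arctan sin_arctan w_def)
  show "\<bar>arctan w\<bar> \<le> \<bar>v\<bar> / u"
    using abs_arctan_le[of w] assms by (simp add: w_def abs_divide)
qed

lemma near_bisector_in_sector:
  fixes x y x0 y0 r t0 \<theta> s \<eta> :: real
  assumes s: "0 < s" "2 * s < r" and \<theta>: "0 < \<theta>" and \<eta>: "\<eta> \<le> 1 / 8" "\<eta> \<le> \<theta> / 16"
    and hx: "\<bar>x - (x0 + s * cos (t0 + \<theta> / 2))\<bar> < \<eta> * s"
    and hy: "\<bar>y - (y0 + s * sin (t0 + \<theta> / 2))\<bar> < \<eta> * s"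
  shows "(x, y) \<in> sector (x0, y0) r t0 \<theta>"
proof -
  define tm where "tm = t0 + \<theta> / 2"
  define cm sm where "cm = cos tm" and "sm = sin tm"
  define a b where "a = x - x0 - s * cm" and "b = y - y0 - s * sm"
  \<comment> \<open>coordinates of (x - x0, y - y0) along the bisector and orthogonal to it\<close>
  define u v where "u = s + a * cm + b * sm" and "v = b * cm - a * sm"
  have cs: "sm\<^sup>2 + cm\<^sup>2 = 1"
    by (simp add: cm_def sm_def)
  have "u * cm - v * sm = s * cm + a * (sm\<^sup>2 + cm\<^sup>2)" "u * sm + v * cm = s * sm + b * (sm\<^sup>2 + cm\<^sup>2)"
    by (simp_all add: u_def v_def power2_eq_square algebra_simps)
  then have x: "x - x0 = u * cm - v * sm" and y: "y - y0 = u * sm + v * cm"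
    using cs by (simp_all add: a_def b_def)
  have ab: "\<bar>a\<bar> < \<eta> * s" "\<bar>b\<bar> < \<eta> * s"
    using hx hy by (simp_all add: a_def b_def cm_def sm_def tm_def algebra_simps)
  have "\<bar>a * cm\<bar> \<le> \<bar>a\<bar>" "\<bar>b * sm\<bar> \<le> \<bar>b\<bar>" "\<bar>b * cm\<bar> \<le> \<bar>b\<bar>" "\<bar>a * sm\<bar> \<le> \<bar>a\<bar>"
    unfolding abs_mult cm_def sm_def by (auto intro: mult_right_le_one_le)
  moreover have "\<eta> * s \<le> s / 8" "\<eta> * s \<le> \<theta> * s / 16"
    using \<eta> s by (auto intro: mult_right_mono)
  ultimately have u: "3 / 4 * s < u" "u < 5 / 4 * s" and v: "\<bar>v\<bar> < s / 4" "\<bar>v\<bar> < \<theta> * s / 8"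
    using ab unfolding u_def v_def by linarith+
  have "0 < u"
    using u s by linarith
  then obtain \<phi> where \<phi>: "\<bar>\<phi>\<bar> \<le> \<bar>v\<bar> / u"
    and polar: "sqrt (u\<^sup>2 + v\<^sup>2) * cos \<phi> = u" "sqrt (u\<^sup>2 + v\<^sup>2) * sin \<phi> = v"
    by (rule polar_form_right_half_plane)
  define \<rho> where "\<rho> = sqrt (u\<^sup>2 + v\<^sup>2)"
  have "\<theta> / 2 * (3 / 4 * s) < \<theta> / 2 * u" "0 < \<theta> * s"
    using u \<theta> s by simp_all
  then have "\<bar>v\<bar> < \<theta> / 2 * u"
    using v by linarith
  then have "\<bar>v\<bar> / u < \<theta> / 2"
    using \<open>0 < u\<close> by (simp add: pos_divide_less_eq)
  then have "\<bar>\<phi>\<bar> < \<theta> / 2"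
    using \<phi> by linarith
  moreover have "0 < \<rho>"
    using \<open>0 < u\<close> by (simp add: \<rho>_def add_pos_nonneg)
  moreover have "\<rho> \<le> u + \<bar>v\<bar>"
    using sqrt_sum_squares_le_sum_abs[of u v] \<open>0 < u\<close> by (simp add: \<rho>_def)
  then have "\<rho> < r"
    using u v s by linarith
  moreover have "\<rho> * cos (tm + \<phi>) = cm * (\<rho> * cos \<phi>) - sm * (\<rho> * sin \<phi>)"
    "\<rho> * sin (tm + \<phi>) = sm * (\<rho> * cos \<phi>) + cm * (\<rho> * sin \<phi>)"
    by (simp_all add: cos_add sin_add cm_def sm_def algebra_simps)
  then have "x = x0 + \<rho> * cos (tm + \<phi>)" "y = y0 + \<rho> * sin (tm + \<phi>)"
    using x y polar unfolding \<rho>_def by (simp_all add: algebra_simps)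
  moreover have "t0 < tm + \<phi>" "tm + \<phi> < t0 + \<theta>"
    using \<open>\<bar>\<phi>\<bar> < \<theta> / 2\<close> by (auto simp: tm_def)
  ultimately show ?thesis
    unfolding sector_def by force
qed

lemma countable_orbit2: "countable (orbit2 F G z)"
proof (rule countable_subset)
  show "orbit2 F G z \<subseteq>
      (\<lambda>(n, k, m). (iter_int F n (fst z) + of_int k, iter_int G n (snd z) + of_int m)) ` UNIV"
  proof
    fix p assume "p \<in> orbit2 F G z"
    then obtain n k m where "p = (iter_int F n (fst z) + of_int k, iter_int G n (snd z) + of_int m)"
      unfolding orbit2_def by blast
    then show "p \<in> (\<lambda>(n, k, m). (iter_int F n (fst z) + of_int k, iter_int G n (snd z) + of_int m)) ` UNIV"
      by (intro image_eqI[of _ _ "(n, k, m)"]) auto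
  qed
qed simp

lemma uncountable_avoids_countable:
  assumes "uncountable X" "countable S"
  obtains x where "x \<in> X" "(x, y) \<notin> S"
proof -
  have "\<not> X \<subseteq> fst ` S"
    using assms countable_subset by blast
  then show thesis
    using that by force
qed

theorem lemma23:
  fixes F G :: "real \<Rightarrow> real" and \<alpha> \<beta> :: real and Q1 Q2 :: "real set"
    and x0 y0 \<delta>1 \<delta>2 C1 C2 :: real
  assumes "denjoy_counterexample F \<alpha>" and "denjoy_counterexample G \<beta>"
    and "\<forall>a b c :: int. of_int a + of_int b * \<alpha> + of_int c * \<beta> = 0 \<longrightarrow> a = 0 \<and> b = 0 \<and> c = 0"
    and "minimal_set F Q1" and "minimal_set G Q2"
    and "x0 \<in> irr_part Q1" and "y0 \<in> irr_part Q2"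
    and "0 < \<delta>1" and "\<delta>1 < 1/2" and "x0 - \<delta>1 \<in> irr_part Q1" and "x0 + \<delta>1 \<in> irr_part Q1"
    and "0 < \<delta>2" and "\<delta>2 < 1/2" and "y0 - \<delta>2 \<in> irr_part Q2" and "y0 + \<delta>2 \<in> irr_part Q2"
    and "C1 > 0" and "C2 > 0"
    and "\<forall>a b. {a<..<b} \<in> components (- Q1) \<and> {a<..<b} \<subseteq> {x0 - \<delta>1 .. x0 + \<delta>1} \<longrightarrow>
           b - a \<le> C1 * \<bar>x0 - (a + b) / 2\<bar>\<^sup>2"
    and "\<forall>a b. {a<..<b} \<in> components (- Q2) \<and> {a<..<b} \<subseteq> {y0 - \<delta>2 .. y0 + \<delta>2} \<longrightarrow>
           b - a \<le> C2 * \<bar>y0 - (a + b) / 2\<bar>\<^sup>2"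
  shows "\<forall>r t0 \<theta>. 0 < r \<and> 0 < \<theta> \<and> \<theta> < pi \<longrightarrow>
           (\<exists>p \<in> sector (x0, y0) r t0 \<theta>.
              fst p \<in> irr_part Q1 \<and> snd p \<in> irr_part Q2 \<and> p \<notin> orbit2 F G (x0, y0))"
proof (intro allI impI)
  fix r t0 \<theta> :: real
  assume h: "0 < r \<and> 0 < \<theta> \<and> \<theta> < pi"
  have F: "circle_homeo_lift F" and G: "circle_homeo_lift G"
    using assms(1,2) by (simp_all add: denjoy_counterexample_def)
  define \<eta> where "\<eta> = min (1 / 8) (\<theta> / 16)"
  have \<eta>: "0 < \<eta>" "\<eta> \<le> 1" "\<eta> \<le> 1 / 8" "\<eta> \<le> \<theta> / 16"
    using h by (auto simp: \<eta>_def)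
  obtain s1 where "s1 > 0" and X: "\<And>s c. 0 < s \<Longrightarrow> s < s1 \<Longrightarrow> \<bar>c - x0\<bar> \<le> s \<Longrightarrow>
      uncountable ({c - \<eta> * s<..<c + \<eta> * s} \<inter> irr_part Q1)"
    using uncountable_irr_part_near_point[OF F assms(4,6,8,16,18) \<eta>(1,2)] by blast
  obtain s2 where "s2 > 0" and Y: "\<And>s c. 0 < s \<Longrightarrow> s < s2 \<Longrightarrow> \<bar>c - y0\<bar> \<le> s \<Longrightarrow>
      uncountable ({c - \<eta> * s<..<c + \<eta> * s} \<inter> irr_part Q2)"
    using uncountable_irr_part_near_point[OF G assms(5,7,12,17,19) \<eta>(1,2)] by blast
  \<comment> \<open>centre the two coordinate windows at distance s from z0 on the bisector of the sector\<close>
  define s where "s = min (min s1 s2) r / 3"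
  have s: "0 < s" "s < s1" "s < s2" "2 * s < r"
    using \<open>s1 > 0\<close> \<open>s2 > 0\<close> h by (auto simp: s_def)
  define cx cy where "cx = x0 + s * cos (t0 + \<theta> / 2)" and "cy = y0 + s * sin (t0 + \<theta> / 2)"
  have "\<bar>cx - x0\<bar> \<le> s" "\<bar>cy - y0\<bar> \<le> s"
    using s(1) by (simp_all add: cx_def cy_def abs_mult mult_right_le_one_le)
  then have UX: "uncountable ({cx - \<eta> * s<..<cx + \<eta> * s} \<inter> irr_part Q1)"
    and UY: "uncountable ({cy - \<eta> * s<..<cy + \<eta> * s} \<inter> irr_part Q2)"
    using X Y s by blast+
  then obtain y where y: "y \<in> {cy - \<eta> * s<..<cy + \<eta> * s} \<inter> irr_part Q2"
    by (metis countable_empty ex_in_conv)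
  obtain x where x: "x \<in> {cx - \<eta> * s<..<cx + \<eta> * s} \<inter> irr_part Q1"
    and "(x, y) \<notin> orbit2 F G (x0, y0)"
    using uncountable_avoids_countable[OF UX countable_orbit2] by blast
  moreover have "(x, y) \<in> sector (x0, y0) r t0 \<theta>"
    using x y h \<eta>(3,4) s(1,4)
    by (intro near_bisector_in_sector) (auto simp: cx_def cy_def abs_less_iff algebra_simps)
  ultimately show "\<exists>p\<in>sector (x0, y0) r t0 \<theta>.
      fst p \<in> irr_part Q1 \<and> snd p \<in> irr_part Q2 \<and> p \<notin> orbit2 F G (x0, y0)"
    using y by force
qed

end
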